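(* Let $d\ge 3$ be an integer, $p\in(0,1]$ with $dp\ge\log^5 d$, and $\delta\in(0,1)$ with $\delta^2dp\ge 12\log^4 d$. For the pruning process on $Q^d_p$ defined in the context, for every $v\in V(Q^d)$ and every $t\in[2,\tau]\cap\mathbb{N}$, \[\mathbb{P}[v\in A_t]\le\exp\left\{-\left(\frac{\delta dp}{2t\log d}\right)^{t-1}\right\}.\]
   Context: $Q^d$ is the $d$-dimensional hypercube (vertex set $\{0,1\}^d$, adjacency = Hamming distance one), and $Q^d_p$ is obtained by retaining each edge of $Q^d$ independently with probability $p$. For a graph $F$ and $S\subseteq V(F)$, $F[S]$ is the induced subgraph. Pruning process: let $\tau=\lfloor\log d\rfloor$ (natural log) and $\delta_t=\frac{t\delta}{\lfloor\log d\rfloor}$ for $t\in\mathbb{N}$. Let $H_1=Q^d_p$ and $A_1=\{v\in V(Q^d): d_{H_1}(v)\notin[(1-\delta_1)dp,(1+\delta_1)dp]\}$. For $t=2,\dots,\tau$, let $H_t=Q^d_p\left[V(Q^d)\setminus\bigcup_{i=1}^{t-1}A_i\right]$ and $A_t=\{v\in V(H_t): d_{H_t}(v)<(1-\delta_t)dp\}$. Finally $H=H_\tau$ and $A=\bigcup_{t=1}^\tau A_t$. *)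

theory Defs
  imports "HOL-Probability.Probability"
begin

text \<open>Vertices of Q^d: subsets of {0..<d} (identified with 0/1-vectors via indicator).\<close>
definition cube_V :: "nat \<Rightarrow> nat set set" where
  "cube_V d = Pow {..<d}"

definition cube_adj :: "nat set \<Rightarrow> nat set \<Rightarrow> bool" where
  "cube_adj u v \<longleftrightarrow> card ((u - v) \<union> (v - u)) = 1"

definition cube_E :: "nat \<Rightarrow> nat set set set" where
  "cube_E d = {{u, v} | u v. u \<in> cube_V d \<and> v \<in> cube_V d \<and> cube_adj u v}"

text \<open>Q^d_p: each edge retained independently with probability p; an outcome
  is the indicator function of the retained edges.\<close>
definition Qdp :: "nat \<Rightarrow> real \<Rightarrow> (nat set set \<Rightarrow> bool) pmf" where
  "Qdp d p = Pi_pmf (cube_E d) False (\<lambda>_. bernoulli_pmf p)"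

definition deg_in :: "nat \<Rightarrow> (nat set set \<Rightarrow> bool) \<Rightarrow> nat set set \<Rightarrow> nat set \<Rightarrow> nat" where
  "deg_in d \<omega> S v = card {u \<in> S \<inter> cube_V d. cube_adj u v \<and> \<omega> {u, v}}"

definition delta_t :: "nat \<Rightarrow> real \<Rightarrow> nat \<Rightarrow> real" where
  "delta_t d \<delta> t = real t * \<delta> / real_of_int \<lfloor>ln (real d)\<rfloor>"

text \<open>prune_step d p \<delta> \<omega> k R is the set A_{k+1}, given R = A_1 \<union> ... \<union> A_k.\<close>
definition prune_step :: "nat \<Rightarrow> real \<Rightarrow> real \<Rightarrow> (nat set set \<Rightarrow> bool) \<Rightarrow> nat \<Rightarrow> nat set set \<Rightarrow> nat set set" where
  "prune_step d p \<delta> \<omega> k R =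
     (if k = 0 then
        {v \<in> cube_V d. real (deg_in d \<omega> (cube_V d) v) \<notin>
             {(1 - delta_t d \<delta> 1) * real d * p .. (1 + delta_t d \<delta> 1) * real d * p}}
      else
        {v \<in> cube_V d - R. real (deg_in d \<omega> (cube_V d - R) v) <
             (1 - delta_t d \<delta> (Suc k)) * real d * p})"

text \<open>prune_removed k = A_1 \<union> ... \<union> A_k.\<close>
primrec prune_removed :: "nat \<Rightarrow> real \<Rightarrow> real \<Rightarrow> (nat set set \<Rightarrow> bool) \<Rightarrow> nat \<Rightarrow> nat set set" where
  "prune_removed d p \<delta> \<omega> 0 = {}"
| "prune_removed d p \<delta> \<omega> (Suc k) =
     prune_removed d p \<delta> \<omega> k \<union> prune_step d p \<delta> \<omega> k (prune_removed d p \<delta> \<omega> k)"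

text \<open>A_t for t \<ge> 1.\<close>
definition prune_A :: "nat \<Rightarrow> real \<Rightarrow> real \<Rightarrow> (nat set set \<Rightarrow> bool) \<Rightarrow> nat \<Rightarrow> nat set set" where
  "prune_A d p \<delta> \<omega> t = prune_step d p \<delta> \<omega> (t - 1) (prune_removed d p \<delta> \<omega> (t - 1))"

end

theory Submission
  imports Defs
begin

text \<open>If \<open>v \<in> A\<^sub>t\<close>, then every \<open>x \<in> A\<^sub>s\<close> with \<open>s \<ge> 2\<close> lost more than \<open>\<delta>dp/\<lfloor>log d\<rfloor>\<close> neighbours
  to \<open>A\<^sub>s\<^sub>-\<^sub>1\<close>; since at most \<open>j\<close> neighbours of a vertex at distance \<open>j\<close> from \<open>v\<close> are closer to \<open>v\<close>,
  double counting shows that the vertices of \<open>A\<^sub>t\<^sub>-\<^sub>j\<close> at distance \<open>j\<close> from \<open>v\<close> number at least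
  \<open>a ^ j\<close>, where \<open>a = \<delta>dp/(2t log d)\<close>. Hence at least \<open>n = \<lceil>a ^ (t - 1)\<rceil>\<close> vertices on the sphere
  of radius \<open>t - 1\<close> around \<open>v\<close> lie in \<open>A\<^sub>1\<close>, i.e. have a degree deviating from \<open>dp\<close> by a factor
  \<open>\<delta>/\<lfloor>log d\<rfloor>\<close>. Vertices on a common sphere are pairwise non-adjacent, so their degrees are
  independent and a Chernoff bound applies jointly; a union bound over the at most \<open>d ^ ((t - 1) n)\<close>
  choices of \<open>n\<close> such vertices and the \<open>2 ^ n\<close> signs of their deviations finishes the proof.\<close>

subsection \<open>The hypercube\<close>

definition symdiff :: "nat set \<Rightarrow> nat set \<Rightarrow> nat set" where
  "symdiff a b = (a - b) \<union> (b - a)"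

definition flip :: "nat set \<Rightarrow> nat \<Rightarrow> nat set" where
  "flip u i = (if i \<in> u then u - {i} else insert i u)"

lemma symdiff_flip: "symdiff u (flip u i) = {i}"
  unfolding symdiff_def flip_def by auto

lemma symdiff_commute: "symdiff a b = symdiff b a"
  unfolding symdiff_def by auto

lemma symdiff_flip_right: "symdiff v (flip x i) = flip (symdiff v x) i"
  unfolding symdiff_def flip_def by auto

lemma cube_adj_iff_flip: "cube_adj w u \<longleftrightarrow> (\<exists>i. w = flip u i)"
proof
  assume "cube_adj w u"
  then obtain i where i: "symdiff w u = {i}"
    unfolding cube_adj_def symdiff_def[symmetric] by (auto simp: card_1_singleton_iff)
  have "j \<in> w \<longleftrightarrow> (j \<in> u \<longleftrightarrow> j \<noteq> i)" for j
    using i unfolding symdiff_def by (metis DiffD1 DiffD2 DiffI UnCI UnE singletonD singletonI)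
  hence "w = flip u i" unfolding flip_def by auto
  thus "\<exists>i. w = flip u i" by blast
next
  assume "\<exists>i. w = flip u i"
  then obtain i where "w = flip u i" by blast
  hence "symdiff w u = {i}" using symdiff_flip symdiff_commute by metis
  thus "cube_adj w u" unfolding cube_adj_def symdiff_def[symmetric] by simp
qed

lemma cube_adj_commute: "cube_adj u w = cube_adj w u"
  unfolding cube_adj_def by (simp add: Un_commute)

lemma cube_adj_neq: "cube_adj w u \<Longrightarrow> w \<noteq> u"
  unfolding cube_adj_def by auto

lemma inj_flip: "inj (flip u)"
  unfolding inj_def flip_def by (auto split: if_splits)

lemma flip_in_cube_V_iff: "u \<in> cube_V d \<Longrightarrow> flip u i \<in> cube_V d \<longleftrightarrow> i < d"
  unfolding cube_V_def flip_def by auto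

lemma finite_cube_V: "finite (cube_V d)"
  unfolding cube_V_def by simp

lemma finite_cube_vertex: "u \<in> cube_V d \<Longrightarrow> finite u"
  unfolding cube_V_def using finite_subset by auto

lemma finite_symdiff_cube_V: "v \<in> cube_V d \<Longrightarrow> w \<in> cube_V d \<Longrightarrow> finite (symdiff v w)"
  using finite_cube_vertex unfolding symdiff_def by blast

lemma cube_neighbours_eq: "u \<in> cube_V d \<Longrightarrow> {w \<in> cube_V d. cube_adj w u} = flip u ` {..<d}"
  using flip_in_cube_V_iff[of u d] by (auto simp: cube_adj_iff_flip)

lemma card_cube_neighbours: "u \<in> cube_V d \<Longrightarrow> card {w \<in> cube_V d. cube_adj w u} = d"
  by (simp add: cube_neighbours_eq card_image inj_on_subset[OF inj_flip])

lemma card_flip_notin: "finite A \<Longrightarrow> i \<notin> A \<Longrightarrow> card (flip A i) = card A + 1"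
  unfolding flip_def by simp

lemma card_flip_in: "finite A \<Longrightarrow> i \<in> A \<Longrightarrow> card (flip A i) + 1 = card A"
  unfolding flip_def using card_Suc_Diff1 by fastforce

lemma card_neighbours_not_outward_le:
  assumes v: "v \<in> cube_V d" and x: "x \<in> cube_V d"
  shows "card {u \<in> cube_V d. cube_adj u x \<and> card (symdiff v u) \<noteq> card (symdiff v x) + 1}
           \<le> card (symdiff v x)"
proof -
  have fin: "finite (symdiff v x)" using finite_symdiff_cube_V[OF v x] .
  have "{u \<in> cube_V d. cube_adj u x \<and> card (symdiff v u) \<noteq> card (symdiff v x) + 1}
          \<subseteq> flip x ` symdiff v x"
  proof
    fix u assume u: "u \<in> {u \<in> cube_V d. cube_adj u x \<and> card (symdiff v u) \<noteq> card (symdiff v x) + 1}"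
    then obtain i where ui: "u = flip x i" by (auto simp: cube_adj_iff_flip)
    have "i \<in> symdiff v x"
      using u ui card_flip_notin[OF fin] by (auto simp: symdiff_flip_right)
    thus "u \<in> flip x ` symdiff v x" using ui by blast
  qed
  hence "card {u \<in> cube_V d. cube_adj u x \<and> card (symdiff v u) \<noteq> card (symdiff v x) + 1}
           \<le> card (flip x ` symdiff v x)"
    by (intro card_mono) (use fin in auto)
  also have "\<dots> \<le> card (symdiff v x)" by (rule card_image_le[OF fin])
  finally show ?thesis .
qed

definition cube_sphere :: "nat \<Rightarrow> nat set \<Rightarrow> nat \<Rightarrow> nat set set" where
  "cube_sphere d v r = {w \<in> cube_V d. card (symdiff v w) = r}"

lemma finite_cube_sphere: "finite (cube_sphere d v r)"
  unfolding cube_sphere_def using finite_cube_V by simp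

lemma cube_sphere_not_adj:
  assumes v: "v \<in> cube_V d" and "u \<in> cube_sphere d v r" "w \<in> cube_sphere d v r"
  shows "\<not> cube_adj u w"
proof
  assume "cube_adj u w"
  then obtain i where "u = flip w i" by (auto simp: cube_adj_iff_flip)
  moreover have "finite (symdiff v w)" using finite_symdiff_cube_V[OF v] assms(3) by (simp add: cube_sphere_def)
  ultimately show False
    using assms(2,3) card_flip_in[of "symdiff v w" i] card_flip_notin[of "symdiff v w" i]
    by (cases "i \<in> symdiff v w") (simp_all add: symdiff_flip_right cube_sphere_def)
qed

lemma card_cube_sphere_le:
  assumes v: "v \<in> cube_V d"
  shows "card (cube_sphere d v r) \<le> d ^ r"
proof -
  have "inj_on (symdiff v) (cube_sphere d v r)"
    by (rule inj_onI) (auto simp: symdiff_def)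
  moreover have "symdiff v ` cube_sphere d v r \<subseteq> {B. B \<subseteq> {..<d} \<and> card B = r}"
    using v by (auto simp: symdiff_def cube_V_def cube_sphere_def)
  moreover have "finite {B. B \<subseteq> {..<d} \<and> card B = r}"
    by (rule finite_subset[of _ "Pow {..<d}"]) auto
  ultimately have "card (cube_sphere d v r) \<le> card {B. B \<subseteq> {..<d} \<and> card B = r}"
    by (rule card_inj_on_le)
  also have "\<dots> = d choose r" using n_subsets[of "{..<d}" r] by simp
  also have "\<dots> \<le> d ^ r"
    by (cases "r \<le> d") (auto intro: binomial_le_pow simp: binomial_eq_0)
  finally show ?thesis .
qed

lemma finite_cube_E: "finite (cube_E d)"
proof -
  have "cube_E d \<subseteq> Pow (cube_V d)" unfolding cube_E_def by auto
  thus ?thesis using finite_cube_V finite_subset by blast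
qed

lemma cube_edges_at_eq:
  "u \<in> cube_V d \<Longrightarrow> {e \<in> cube_E d. u \<in> e} = (\<lambda>w. {w, u}) ` {w \<in> cube_V d. cube_adj w u}"
  unfolding cube_E_def by (auto simp: cube_adj_commute)

lemma inj_on_edge_to: "inj_on (\<lambda>w. {w, u}) {w \<in> cube_V d. cube_adj w u}"
  by (rule inj_onI) (auto simp: doubleton_eq_iff dest: cube_adj_neq)

lemma card_cube_edges_at: "u \<in> cube_V d \<Longrightarrow> card {e \<in> cube_E d. u \<in> e} = d"
  by (simp add: cube_edges_at_eq card_image[OF inj_on_edge_to] card_cube_neighbours)

lemma cube_edge_meets_independent_set:
  assumes S: "\<forall>u\<in>S. \<forall>w\<in>S. \<not> cube_adj u w" and e: "e \<in> cube_E d"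
  shows "{u \<in> S. u \<in> e} = {} \<or> (\<exists>u. {u \<in> S. u \<in> e} = {u})"
proof -
  obtain a b where ab: "e = {a, b}" "cube_adj a b" using e unfolding cube_E_def by auto
  have "\<not> (a \<in> S \<and> b \<in> S)" using S ab(2) by blast
  thus ?thesis using ab(1) by auto
qed

lemma deg_in_cube_V_eq_sum:
  assumes u: "u \<in> cube_V d"
  shows "real (deg_in d \<omega> (cube_V d) u) = (\<Sum>e\<in>{e \<in> cube_E d. u \<in> e}. if \<omega> e then 1 else 0)"
proof -
  have "deg_in d \<omega> (cube_V d) u = card ((\<lambda>w. {w, u}) ` {w \<in> cube_V d. cube_adj w u \<and> \<omega> {w, u}})"
    unfolding deg_in_def by (subst card_image) (auto intro: inj_on_subset[OF inj_on_edge_to])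
  also have "(\<lambda>w. {w, u}) ` {w \<in> cube_V d. cube_adj w u \<and> \<omega> {w, u}} = {e \<in> {e \<in> cube_E d. u \<in> e}. \<omega> e}"
    using cube_edges_at_eq[OF u] by auto
  finally show ?thesis
    by (simp add: sum.If_cases finite_cube_E Int_def conj_commute)
qed

subsection \<open>Growth of the pruned layers\<close>

lemma prune_A_subset_cube_V: "prune_A d p \<delta> \<omega> s \<subseteq> cube_V d"
  unfolding prune_A_def prune_step_def by auto

lemma prune_A_Suc_subset: "prune_A d p \<delta> \<omega> (Suc k) \<subseteq> cube_V d - prune_removed d p \<delta> \<omega> k"
  unfolding prune_A_def prune_step_def by auto

lemma prune_removed_Suc_eq:
  "prune_removed d p \<delta> \<omega> (Suc k) = prune_removed d p \<delta> \<omega> k \<union> prune_A d p \<delta> \<omega> (Suc k)"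
  unfolding prune_A_def by simp

lemma prune_A_one_eq:
  "prune_A d p \<delta> \<omega> 1 = {v \<in> cube_V d. real (deg_in d \<omega> (cube_V d) v) \<notin>
     {(1 - delta_t d \<delta> 1) * real d * p .. (1 + delta_t d \<delta> 1) * real d * p}}"
  unfolding prune_A_def prune_step_def by simp

lemma deg_in_ge_if_not_pruned:
  assumes "x \<in> cube_V d - prune_removed d p \<delta> \<omega> k" "x \<notin> prune_A d p \<delta> \<omega> (Suc k)"
  shows "(1 - delta_t d \<delta> (Suc k)) * real d * p \<le> real (deg_in d \<omega> (cube_V d - prune_removed d p \<delta> \<omega> k) x)"
  using assms unfolding prune_A_def prune_step_def by (cases k) auto

text \<open>A vertex pruned at step \<open>k + 2\<close> survived step \<open>k + 1\<close>, and the threshold rose by \<open>\<delta>/\<lfloor>log d\<rfloor>\<close>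
  in between, so it lost more than \<open>\<delta>dp/\<lfloor>log d\<rfloor>\<close> neighbours to \<open>A\<^sub>k\<^sub>+\<^sub>1\<close>.\<close>

lemma card_adj_prev_prune_A_gt:
  assumes x: "x \<in> prune_A d p \<delta> \<omega> (Suc (Suc k))"
  shows "\<delta> * real d * p / real_of_int \<lfloor>ln (real d)\<rfloor> < real (card {u \<in> prune_A d p \<delta> \<omega> (Suc k). cube_adj u x})"
proof -
  define R0 where "R0 = prune_removed d p \<delta> \<omega> k"
  define A1 where "A1 = prune_A d p \<delta> \<omega> (Suc k)"
  define R1 where "R1 = prune_removed d p \<delta> \<omega> (Suc k)"
  have R1: "R1 = R0 \<union> A1" unfolding R1_def R0_def A1_def by (rule prune_removed_Suc_eq)
  have A1_sub: "A1 \<subseteq> cube_V d - R0" unfolding A1_def R0_def by (rule prune_A_Suc_subset)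
  have x_R1: "x \<in> cube_V d - R1"
    and deg_R1: "real (deg_in d \<omega> (cube_V d - R1) x) < (1 - delta_t d \<delta> (Suc (Suc k))) * real d * p"
    using x unfolding prune_A_def prune_step_def R1_def by auto
  have deg_R0: "(1 - delta_t d \<delta> (Suc k)) * real d * p \<le> real (deg_in d \<omega> (cube_V d - R0) x)"
    using deg_in_ge_if_not_pruned[of x d p \<delta> \<omega> k] x_R1 R1 unfolding R0_def A1_def by auto
  have "{u \<in> (cube_V d - R0) \<inter> cube_V d. cube_adj u x \<and> \<omega> {u, x}} =
        {u \<in> (cube_V d - R1) \<inter> cube_V d. cube_adj u x \<and> \<omega> {u, x}} \<union> {u \<in> A1. cube_adj u x \<and> \<omega> {u, x}}"
    using R1 A1_sub by auto
  hence "deg_in d \<omega> (cube_V d - R0) x = deg_in d \<omega> (cube_V d - R1) x + card {u \<in> A1. cube_adj u x \<and> \<omega> {u, x}}"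
    unfolding deg_in_def using R1 A1_sub finite_cube_V
    by (subst card_Un_disjoint[symmetric]) (auto intro: finite_subset)
  moreover have "card {u \<in> A1. cube_adj u x \<and> \<omega> {u, x}} \<le> card {u \<in> A1. cube_adj u x}"
    using A1_sub finite_cube_V by (intro card_mono) (auto intro: finite_subset)
  moreover have "delta_t d \<delta> (Suc (Suc k)) - delta_t d \<delta> (Suc k) = \<delta> / real_of_int \<lfloor>ln (real d)\<rfloor>"
    unfolding delta_t_def by (simp add: add_divide_distrib[symmetric] algebra_simps)
  ultimately show ?thesis
    using deg_R0 deg_R1 unfolding A1_def by (simp add: algebra_simps)
qed

definition prune_layer ::
  "nat \<Rightarrow> real \<Rightarrow> real \<Rightarrow> (nat set set \<Rightarrow> bool) \<Rightarrow> nat set \<Rightarrow> nat \<Rightarrow> nat \<Rightarrow> nat set set" where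
  "prune_layer d p \<delta> \<omega> v t j = cube_sphere d v j \<inter> prune_A d p \<delta> \<omega> (t - j)"

lemma finite_prune_layer: "finite (prune_layer d p \<delta> \<omega> v t j)"
  unfolding prune_layer_def using finite_cube_sphere by simp

text \<open>Double counting the edges between consecutive layers: each vertex of layer \<open>j\<close> has at least
  \<open>\<Delta> - j\<close> neighbours in layer \<open>j + 1\<close>, each vertex of which has at most \<open>j + 1\<close> neighbours in layer \<open>j\<close>.\<close>

lemma card_prune_layer_Suc_ge:
  assumes v: "v \<in> cube_V d" and j: "j + 2 \<le> t"
  shows "(\<delta> * real d * p / real_of_int \<lfloor>ln (real d)\<rfloor> - real j) * real (card (prune_layer d p \<delta> \<omega> v t j))
           \<le> real (j + 1) * real (card (prune_layer d p \<delta> \<omega> v t (j + 1)))"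
proof -
  define T where "T = prune_layer d p \<delta> \<omega> v t"
  define \<Delta> where "\<Delta> = \<delta> * real d * p / real_of_int \<lfloor>ln (real d)\<rfloor>"
  have fin: "finite (T i)" for i unfolding T_def by (rule finite_prune_layer)
  have outward: "\<Delta> - real j \<le> real (card {u \<in> T (j+1). cube_adj u x})" if x: "x \<in> T j" for x
  proof -
    define k where "k = t - j - 2"
    have k: "t - j = Suc (Suc k)" "t - (j+1) = Suc k" using j unfolding k_def by auto
    have xV: "x \<in> cube_V d" and xd: "card (symdiff v x) = j" and xA: "x \<in> prune_A d p \<delta> \<omega> (Suc (Suc k))"
      using x k unfolding T_def prune_layer_def cube_sphere_def by auto
    define Back where "Back = {u \<in> cube_V d. cube_adj u x \<and> card (symdiff v u) \<noteq> card (symdiff v x) + 1}"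
    have "{u \<in> prune_A d p \<delta> \<omega> (Suc k). cube_adj u x} \<subseteq> {u \<in> T (j+1). cube_adj u x} \<union> Back"
      using prune_A_subset_cube_V[of d p \<delta> \<omega> "Suc k"] k xd unfolding T_def prune_layer_def cube_sphere_def Back_def by auto
    hence "card {u \<in> prune_A d p \<delta> \<omega> (Suc k). cube_adj u x} \<le> card ({u \<in> T (j+1). cube_adj u x} \<union> Back)"
      using fin finite_cube_V unfolding Back_def by (intro card_mono) auto
    also have "\<dots> \<le> card {u \<in> T (j+1). cube_adj u x} + card Back" by (rule card_Un_le)
    also have "\<dots> \<le> card {u \<in> T (j+1). cube_adj u x} + j"
      using card_neighbours_not_outward_le[OF v xV] xd unfolding Back_def by simp
    finally show ?thesis using card_adj_prev_prune_A_gt[OF xA] unfolding \<Delta>_def by linarith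
  qed
  have inward: "real (card {x \<in> T j. cube_adj u x}) \<le> real (j + 1)" if u: "u \<in> T (j+1)" for u
  proof -
    have uV: "u \<in> cube_V d" and ud: "card (symdiff v u) = j + 1"
      using u unfolding T_def prune_layer_def cube_sphere_def by auto
    have "{x \<in> T j. cube_adj u x} \<subseteq> {x \<in> cube_V d. cube_adj x u \<and> card (symdiff v x) \<noteq> card (symdiff v u) + 1}"
      using ud cube_adj_commute unfolding T_def prune_layer_def cube_sphere_def by auto
    hence "card {x \<in> T j. cube_adj u x} \<le> card {x \<in> cube_V d. cube_adj x u \<and> card (symdiff v x) \<noteq> card (symdiff v u) + 1}"
      using finite_cube_V by (intro card_mono) auto
    also have "\<dots> \<le> j + 1" using card_neighbours_not_outward_le[OF v uV] ud by simp
    finally show ?thesis by simp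
  qed
  have "(\<Delta> - real j) * real (card (T j)) = (\<Sum>x\<in>T j. \<Delta> - real j)" by simp
  also have "\<dots> \<le> (\<Sum>x\<in>T j. real (card {u \<in> T (j+1). cube_adj u x}))"
    by (intro sum_mono outward)
  also have "\<dots> = (\<Sum>x\<in>T j. \<Sum>u\<in>{u. u \<in> T (j+1) \<and> cube_adj u x}. (1::real))" by simp
  also have "\<dots> = (\<Sum>u\<in>T (j+1). \<Sum>x\<in>{x. x \<in> T j \<and> cube_adj u x}. (1::real))"
    by (rule sum.swap_restrict[OF fin fin])
  also have "\<dots> = (\<Sum>u\<in>T (j+1). real (card {x \<in> T j. cube_adj u x}))" by simp
  also have "\<dots> \<le> (\<Sum>u\<in>T (j+1). real (j + 1))" by (intro sum_mono inward)
  also have "\<dots> = real (j + 1) * real (card (T (j + 1)))" by simp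
  finally show ?thesis unfolding \<Delta>_def T_def .
qed

lemma card_prune_layer_ge:
  fixes a :: real
  assumes v: "v \<in> cube_V d" and vA: "v \<in> prune_A d p \<delta> \<omega> t" and a: "0 \<le> a"
    and rate: "\<And>j. j + 2 \<le> t \<Longrightarrow> real (j + 1) * a \<le> \<delta> * real d * p / real_of_int \<lfloor>ln (real d)\<rfloor> - real j"
    and j: "j + 1 \<le> t"
  shows "a ^ j \<le> real (card (prune_layer d p \<delta> \<omega> v t j))"
  using j
proof (induction j)
  case 0
  have "w = v" if "w \<in> cube_V d" "card (symdiff v w) = 0" for w
    using that finite_symdiff_cube_V[OF v that(1)] unfolding symdiff_def by auto
  hence "prune_layer d p \<delta> \<omega> v t 0 = {v}"
    using v vA unfolding prune_layer_def cube_sphere_def symdiff_def by auto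
  thus ?case by simp
next
  case (Suc j)
  define \<Delta> where "\<Delta> = \<delta> * real d * p / real_of_int \<lfloor>ln (real d)\<rfloor>"
  have rate_j: "real (j + 1) * a \<le> \<Delta> - real j" using rate[of j] Suc.prems unfolding \<Delta>_def by simp
  have "real (j + 1) * a ^ Suc j = (real (j + 1) * a) * a ^ j" by simp
  also have "\<dots> \<le> (\<Delta> - real j) * real (card (prune_layer d p \<delta> \<omega> v t j))"
  proof (rule mult_mono)
    show "0 \<le> \<Delta> - real j" using rate_j a by (meson order.trans zero_le_mult_iff of_nat_0_le_iff)
  qed (use rate_j Suc a in auto)
  also have "\<dots> \<le> real (j + 1) * real (card (prune_layer d p \<delta> \<omega> v t (j + 1)))"
    unfolding \<Delta>_def by (rule card_prune_layer_Suc_ge[OF v]) (use Suc.prems in simp)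
  finally show ?case by (simp del: of_nat_Suc)
qed

subsection \<open>Joint deviations of independent degrees\<close>

lemma finite_set_pmf_Qdp: "finite (set_pmf (Qdp d p))"
proof -
  have "set_pmf (Qdp d p) \<subseteq> {f. \<forall>x. x \<notin> cube_E d \<longrightarrow> f x = False}"
    unfolding Qdp_def by (rule set_Pi_pmf_subset[OF finite_cube_E])
  also have "\<dots> \<subseteq> (\<lambda>S x. x \<in> S) ` Pow (cube_E d)"
  proof
    fix f assume "f \<in> {f. \<forall>x. x \<notin> cube_E d \<longrightarrow> f x = False}"
    hence "f = (\<lambda>x. x \<in> {x \<in> cube_E d. f x})" by auto
    thus "f \<in> (\<lambda>S x. x \<in> S) ` Pow (cube_E d)" by blast
  qed
  finally show ?thesis using finite_cube_E by (meson finite_Pow_iff finite_imageI finite_subset)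
qed

text \<open>The moment generating function of the joint degrees of an independent set factorises,
  because every edge meets the set in at most one vertex.\<close>

lemma expectation_prod_exp_deg_in_independent:
  fixes c :: "nat set \<Rightarrow> real"
  assumes SV: "S \<subseteq> cube_V d" and indep: "\<forall>u\<in>S. \<forall>w\<in>S. \<not> cube_adj u w"
    and p: "0 \<le> p" "p \<le> 1"
  shows "measure_pmf.expectation (Qdp d p) (\<lambda>\<omega>. \<Prod>u\<in>S. exp (c u * real (deg_in d \<omega> (cube_V d) u)))
           = (\<Prod>u\<in>S. ((1 - p) + p * exp (c u)) ^ d)"
proof -
  define f where "f e b = (\<Prod>u\<in>{u. u \<in> S \<and> u \<in> e}. exp (c u * (if b then 1 else 0)))" for e and b :: bool
  define m where "m u = (1 - p) + p * exp (c u)" for u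
  have finS: "finite S" using SV finite_cube_V finite_subset by blast
  have by_edges: "(\<Prod>u\<in>S. exp (c u * real (deg_in d \<omega> (cube_V d) u))) = (\<Prod>e\<in>cube_E d. f e (\<omega> e))" for \<omega>
  proof -
    have "exp (c u * real (deg_in d \<omega> (cube_V d) u))
            = (\<Prod>e\<in>{e. e \<in> cube_E d \<and> u \<in> e}. exp (c u * (if \<omega> e then 1 else 0)))" if "u \<in> S" for u
      using that SV by (auto simp: deg_in_cube_V_eq_sum sum_distrib_left exp_sum finite_cube_E)
    hence "(\<Prod>u\<in>S. exp (c u * real (deg_in d \<omega> (cube_V d) u)))
             = (\<Prod>u\<in>S. \<Prod>e\<in>{e. e \<in> cube_E d \<and> u \<in> e}. exp (c u * (if \<omega> e then 1 else 0)))"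
      by (rule prod.cong[OF refl])
    also have "\<dots> = (\<Prod>e\<in>cube_E d. f e (\<omega> e))"
      unfolding f_def by (rule prod.swap_restrict[OF finS finite_cube_E])
    finally show ?thesis .
  qed
  have per_edge: "measure_pmf.expectation (bernoulli_pmf p) (f e) = (\<Prod>u\<in>{u. u \<in> S \<and> u \<in> e}. m u)"
    if e: "e \<in> cube_E d" for e
  proof -
    have E: "measure_pmf.expectation (bernoulli_pmf p) (f e) = f e True * p + f e False * (1 - p)"
      using p by simp
    from cube_edge_meets_independent_set[OF indep e]
    consider "{u. u \<in> S \<and> u \<in> e} = {}" | u where "{u. u \<in> S \<and> u \<in> e} = {u}" by auto
    thus ?thesis
    proof cases
      case 1
      show ?thesis unfolding E by (simp add: f_def 1)
    next
      case 2
      thus ?thesis unfolding E f_def m_def by (simp add: algebra_simps)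
    qed
  qed
  have "measure_pmf.expectation (Qdp d p) (\<lambda>\<omega>. \<Prod>e\<in>cube_E d. f e (\<omega> e))
          = (\<Prod>e\<in>cube_E d. measure_pmf.expectation (bernoulli_pmf p) (f e))"
    unfolding Qdp_def
    by (rule expectation_prod_Pi_pmf[OF finite_cube_E])
       (auto simp: f_def intro: integrable_measure_pmf_finite prod_nonneg)
  also have "\<dots> = (\<Prod>e\<in>cube_E d. \<Prod>u\<in>{u. u \<in> S \<and> u \<in> e}. m u)"
    by (rule prod.cong[OF refl per_edge])
  also have "\<dots> = (\<Prod>u\<in>S. \<Prod>e\<in>{e. e \<in> cube_E d \<and> u \<in> e}. m u)"
    by (rule prod.swap_restrict[OF finS finite_cube_E, symmetric])
  also have "\<dots> = (\<Prod>u\<in>S. m u ^ d)"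
    using SV by (intro prod.cong[OF refl]) (auto simp: card_cube_edges_at)
  finally show ?thesis unfolding by_edges m_def .
qed

lemma exp_le_1_add_add_square:
  fixes s :: real assumes "\<bar>s\<bar> \<le> 1" shows "exp s \<le> 1 + s + s\<^sup>2"
proof (cases "s \<ge> 0")
  case True thus ?thesis using exp_bound[of s] assms by simp
next
  case False
  have "1 - s \<le> exp (-s)" using exp_ge_add_one_self[of "-s"] by simp
  hence "exp s \<le> 1 / (1 - s)" using False by (simp add: exp_minus field_simps)
  also have "\<dots> \<le> 1 + s + s\<^sup>2"
  proof -
    have "(1 - s) * (1 + s + s\<^sup>2) = 1 - s ^ 3" by (simp add: algebra_simps power2_eq_square power3_eq_cube)
    moreover have "s * s * s \<le> 0" using False by (simp add: mult_nonneg_nonpos)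
    ultimately have "1 \<le> (1 - s) * (1 + s + s\<^sup>2)" by (simp add: power3_eq_cube)
    thus ?thesis using False by (simp add: field_simps)
  qed
  finally show ?thesis .
qed

lemma bernoulli_mgf_pow_deviation_le:
  fixes p \<sigma> \<epsilon> :: real
  assumes p: "0 \<le> p" "p \<le> 1" and \<sigma>: "\<sigma> = 1 \<or> \<sigma> = -1" and \<epsilon>: "0 < \<epsilon>" "\<epsilon> \<le> 1"
  shows "((1 - p) + p * exp (\<epsilon> / 2 * \<sigma>)) ^ d * exp (- (\<epsilon> / 2 * \<sigma> * (real d * p)) - \<epsilon> / 2 * \<epsilon> * (real d * p))
           \<le> exp (- (\<epsilon>\<^sup>2 * (real d * p) / 4))"
proof -
  define s where "s = \<epsilon> / 2 * \<sigma>"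
  have s2: "s\<^sup>2 = \<epsilon>\<^sup>2 / 4" using \<sigma> unfolding s_def by (auto simp: power2_eq_square)
  have "(1 - p) + p * exp s \<le> exp (p * (exp s - 1))"
    using exp_ge_add_one_self[of "p * (exp s - 1)"] by (simp add: algebra_simps)
  hence "((1 - p) + p * exp s) ^ d \<le> exp (p * (exp s - 1)) ^ d"
    using p by (intro power_mono) (auto intro: add_nonneg_nonneg)
  also have "\<dots> = exp (real d * p * (exp s - 1))" by (simp add: exp_of_nat_mult[symmetric] mult.assoc)
  also have "\<dots> \<le> exp (real d * p * (s + s\<^sup>2))"
    using exp_le_1_add_add_square[of s] \<sigma> \<epsilon> p unfolding s_def by (auto intro!: mult_left_mono)
  finally have "((1 - p) + p * exp s) ^ d * exp (- (s * (real d * p)) - \<epsilon> / 2 * \<epsilon> * (real d * p))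
      \<le> exp (real d * p * (s + s\<^sup>2)) * exp (- (s * (real d * p)) - \<epsilon> / 2 * \<epsilon> * (real d * p))"
    by (rule mult_right_mono) simp
  also have "\<dots> = exp (- (\<epsilon>\<^sup>2 * (real d * p) / 4))"
  proof -
    have "real d * p * (s + s\<^sup>2) + (- (s * (real d * p)) - \<epsilon> / 2 * \<epsilon> * (real d * p))
            = - (\<epsilon>\<^sup>2 * (real d * p) / 4)"
      unfolding s2 by (simp add: algebra_simps power2_eq_square)
    thus ?thesis by (simp add: exp_add[symmetric])
  qed
  finally show ?thesis unfolding s_def .
qed

definition deviating_degrees ::
  "nat \<Rightarrow> real \<Rightarrow> real \<Rightarrow> nat set set \<Rightarrow> (nat set \<Rightarrow> real) \<Rightarrow> (nat set set \<Rightarrow> bool) set" where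
  "deviating_degrees d p \<epsilon> S \<sigma> =
     {\<omega>. \<forall>u\<in>S. \<epsilon> * (real d * p) \<le> \<sigma> u * (real (deg_in d \<omega> (cube_V d) u) - real d * p)}"

lemma prob_deviating_degrees_le:
  assumes SV: "S \<subseteq> cube_V d" and indep: "\<forall>u\<in>S. \<forall>w\<in>S. \<not> cube_adj u w"
    and \<sigma>: "\<forall>u\<in>S. \<sigma> u = 1 \<or> \<sigma> u = -1"
    and p: "0 \<le> p" "p \<le> 1" and \<epsilon>: "0 < \<epsilon>" "\<epsilon> \<le> 1"
  shows "measure_pmf.prob (Qdp d p) (deviating_degrees d p \<epsilon> S \<sigma>) \<le> exp (- (\<epsilon>\<^sup>2 * (real d * p) / 4)) ^ card S"
proof -
  define \<mu> where "\<mu> = real d * p"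
  define X where "X \<omega> u = real (deg_in d \<omega> (cube_V d) u)" for \<omega> u
  define g where "g \<omega> = (\<Prod>u\<in>S. exp (\<epsilon> / 2 * \<sigma> u * (X \<omega> u - \<mu>) - \<epsilon> / 2 * \<epsilon> * \<mu>))" for \<omega>
  define B where "B = deviating_degrees d p \<epsilon> S \<sigma>"
  have markov: "indicator B \<omega> \<le> g \<omega>" for \<omega>
  proof (cases "\<omega> \<in> B")
    case True
    have "1 \<le> g \<omega>" unfolding g_def
    proof (rule prod_ge_1)
      fix u assume "u \<in> S"
      hence "\<epsilon> / 2 * (\<epsilon> * \<mu>) \<le> \<epsilon> / 2 * (\<sigma> u * (X \<omega> u - \<mu>))"
        using True \<epsilon> unfolding B_def deviating_degrees_def X_def \<mu>_def by (intro mult_left_mono) auto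
      thus "1 \<le> exp (\<epsilon> / 2 * \<sigma> u * (X \<omega> u - \<mu>) - \<epsilon> / 2 * \<epsilon> * \<mu>)" by (simp add: algebra_simps)
    qed
    thus ?thesis using True by simp
  qed (simp add: g_def prod_nonneg)
  have g_eq: "g \<omega> = (\<Prod>u\<in>S. exp (\<epsilon> / 2 * \<sigma> u * X \<omega> u)) *
                    (\<Prod>u\<in>S. exp (- (\<epsilon> / 2 * \<sigma> u * \<mu>) - \<epsilon> / 2 * \<epsilon> * \<mu>))" for \<omega>
    unfolding g_def prod.distrib[symmetric] by (intro prod.cong) (simp_all add: exp_add[symmetric] field_simps)
  have "measure_pmf.prob (Qdp d p) B = measure_pmf.expectation (Qdp d p) (indicator B)" by simp
  also have "\<dots> \<le> measure_pmf.expectation (Qdp d p) g"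
    by (intro integral_mono markov integrable_measure_pmf_finite finite_set_pmf_Qdp)
  also have "\<dots> = (\<Prod>u\<in>S. ((1 - p) + p * exp (\<epsilon> / 2 * \<sigma> u)) ^ d) *
                  (\<Prod>u\<in>S. exp (- (\<epsilon> / 2 * \<sigma> u * \<mu>) - \<epsilon> / 2 * \<epsilon> * \<mu>))"
    unfolding g_eq X_def
    using expectation_prod_exp_deg_in_independent[OF SV indep p, of "\<lambda>u. \<epsilon> / 2 * \<sigma> u"] by simp
  also have "\<dots> = (\<Prod>u\<in>S. ((1 - p) + p * exp (\<epsilon> / 2 * \<sigma> u)) ^ d *
                    exp (- (\<epsilon> / 2 * \<sigma> u * \<mu>) - \<epsilon> / 2 * \<epsilon> * \<mu>))"
    by (rule prod.distrib[symmetric])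
  also have "\<dots> \<le> (\<Prod>u\<in>S. exp (- (\<epsilon>\<^sup>2 * (real d * p) / 4)))"
    using bernoulli_mgf_pow_deviation_le[OF p _ \<epsilon>] \<sigma> p
    by (intro prod_mono) (auto simp: \<mu>_def mult.assoc intro: add_nonneg_nonneg)
  finally show ?thesis unfolding B_def by simp
qed

subsection \<open>The union bound\<close>

lemma prune_A_subset_deviating_degrees:
  fixes a :: real
  assumes v: "v \<in> cube_V d" and t: "2 \<le> t" and a: "0 \<le> a"
    and rate: "\<And>j. j + 2 \<le> t \<Longrightarrow> real (j + 1) * a \<le> \<delta> * real d * p / real_of_int \<lfloor>ln (real d)\<rfloor> - real j"
    and \<epsilon>: "0 \<le> delta_t d \<delta> 1" and p: "0 \<le> p"
  shows "{\<omega>. v \<in> prune_A d p \<delta> \<omega> t} \<subseteq>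
           (\<Union>S\<in>{S. S \<subseteq> cube_sphere d v (t - 1) \<and> card S = nat \<lceil>a ^ (t - 1)\<rceil>}.
              \<Union>\<sigma>\<in>S \<rightarrow>\<^sub>E {1, -1}. deviating_degrees d p (delta_t d \<delta> 1) S \<sigma>)"
proof
  fix \<omega> assume "\<omega> \<in> {\<omega>. v \<in> prune_A d p \<delta> \<omega> t}"
  hence "a ^ (t - 1) \<le> real (card (prune_layer d p \<delta> \<omega> v t (t - 1)))"
    using card_prune_layer_ge[OF v _ a rate] t by simp
  hence "nat \<lceil>a ^ (t - 1)\<rceil> \<le> card (prune_layer d p \<delta> \<omega> v t (t - 1))"
    by (simp add: nat_le_iff ceiling_le)
  then obtain S where S: "S \<subseteq> prune_layer d p \<delta> \<omega> v t (t - 1)" "card S = nat \<lceil>a ^ (t - 1)\<rceil>"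
    by (meson obtain_subset_with_card_n)
  have layer: "prune_layer d p \<delta> \<omega> v t (t - 1) \<subseteq> cube_sphere d v (t - 1) \<inter> prune_A d p \<delta> \<omega> 1"
    unfolding prune_layer_def using t by auto
  define \<sigma> where "\<sigma> = restrict (\<lambda>u. if real d * p \<le> real (deg_in d \<omega> (cube_V d) u) then 1 else (-1::real)) S"
  have "\<omega> \<in> deviating_degrees d p (delta_t d \<delta> 1) S \<sigma>"
    unfolding deviating_degrees_def
  proof (intro CollectI ballI)
    fix u assume "u \<in> S"
    hence "real (deg_in d \<omega> (cube_V d) u) \<notin>
             {(1 - delta_t d \<delta> 1) * real d * p .. (1 + delta_t d \<delta> 1) * real d * p}"
      using S layer unfolding prune_A_one_eq by auto
    moreover have "0 \<le> delta_t d \<delta> 1 * (real d * p)" using \<epsilon> p by simp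
    ultimately show "delta_t d \<delta> 1 * (real d * p) \<le> \<sigma> u * (real (deg_in d \<omega> (cube_V d) u) - real d * p)"
      using \<open>u \<in> S\<close> unfolding \<sigma>_def by (auto simp: algebra_simps)
  qed
  moreover have "S \<subseteq> cube_sphere d v (t - 1)" "\<sigma> \<in> S \<rightarrow>\<^sub>E {1, -1}"
    using S layer unfolding \<sigma>_def by auto
  ultimately show "\<omega> \<in> (\<Union>S\<in>{S. S \<subseteq> cube_sphere d v (t - 1) \<and> card S = nat \<lceil>a ^ (t - 1)\<rceil>}.
                          \<Union>\<sigma>\<in>S \<rightarrow>\<^sub>E {1, -1}. deviating_degrees d p (delta_t d \<delta> 1) S \<sigma>)"
    using S(2) by blast
qed

lemma prob_deviating_degrees_on_sphere_le:
  assumes v: "v \<in> cube_V d" and p: "0 \<le> p" "p \<le> 1" and \<epsilon>: "0 < \<epsilon>" "\<epsilon> \<le> 1"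
  shows "measure_pmf.prob (Qdp d p)
           (\<Union>S\<in>{S. S \<subseteq> cube_sphere d v r \<and> card S = n}. \<Union>\<sigma>\<in>S \<rightarrow>\<^sub>E {1, -1}. deviating_degrees d p \<epsilon> S \<sigma>)
         \<le> (real d ^ r * 2 * exp (- (\<epsilon>\<^sup>2 * (real d * p) / 4))) ^ n"
proof -
  define q where "q = exp (- (\<epsilon>\<^sup>2 * (real d * p) / 4))"
  define Ss where "Ss = {S. S \<subseteq> cube_sphere d v r \<and> card S = n}"
  have fin_S: "finite S" if "S \<in> Ss" for S
    using that finite_subset[OF _ finite_cube_sphere] unfolding Ss_def by blast
  have fin_Ss: "finite Ss"
    unfolding Ss_def by (rule finite_subset[of _ "Pow (cube_sphere d v r)"]) (auto simp: finite_cube_sphere)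
  have each: "measure_pmf.prob (Qdp d p) (\<Union>\<sigma>\<in>S \<rightarrow>\<^sub>E {1, -1}. deviating_degrees d p \<epsilon> S \<sigma>) \<le> 2 ^ n * q ^ n"
    if S: "S \<in> Ss" for S
  proof -
    have SV: "S \<subseteq> cube_V d" and indep: "\<forall>u\<in>S. \<forall>w\<in>S. \<not> cube_adj u w"
      using S cube_sphere_not_adj[OF v] unfolding Ss_def cube_sphere_def by blast+
    have "measure_pmf.prob (Qdp d p) (\<Union>\<sigma>\<in>S \<rightarrow>\<^sub>E {1, -1}. deviating_degrees d p \<epsilon> S \<sigma>)
            \<le> (\<Sum>\<sigma>\<in>S \<rightarrow>\<^sub>E {1, -1}. measure_pmf.prob (Qdp d p) (deviating_degrees d p \<epsilon> S \<sigma>))"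
      using fin_S[OF S] by (intro measure_pmf.finite_measure_subadditive_finite finite_PiE) auto
    also have "\<dots> \<le> (\<Sum>\<sigma>\<in>S \<rightarrow>\<^sub>E {1, -1::real}. q ^ n)"
    proof (rule sum_mono)
      fix \<sigma> :: "nat set \<Rightarrow> real" assume "\<sigma> \<in> S \<rightarrow>\<^sub>E {1, -1}"
      thus "measure_pmf.prob (Qdp d p) (deviating_degrees d p \<epsilon> S \<sigma>) \<le> q ^ n"
        using S prob_deviating_degrees_le[OF SV indep _ p \<epsilon>, of \<sigma>] unfolding q_def Ss_def by auto
    qed
    also have "\<dots> = 2 ^ n * q ^ n"
      using fin_S[OF S] S by (simp add: card_PiE Ss_def numeral_2_eq_2)
    finally show ?thesis .
  qed
  have "card Ss = card (cube_sphere d v r) choose n"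
    unfolding Ss_def using n_subsets[OF finite_cube_sphere] by simp
  also have "\<dots> \<le> card (cube_sphere d v r) ^ n"
    by (cases "n \<le> card (cube_sphere d v r)") (auto intro: binomial_le_pow simp: binomial_eq_0)
  also have "\<dots> \<le> (d ^ r) ^ n" by (intro power_mono card_cube_sphere_le[OF v]) simp
  finally have card_Ss: "real (card Ss) \<le> (real d ^ r) ^ n" by (metis of_nat_le_iff of_nat_power)
  have "measure_pmf.prob (Qdp d p) (\<Union>S\<in>Ss. \<Union>\<sigma>\<in>S \<rightarrow>\<^sub>E {1, -1}. deviating_degrees d p \<epsilon> S \<sigma>)
           \<le> (\<Sum>S\<in>Ss. measure_pmf.prob (Qdp d p) (\<Union>\<sigma>\<in>S \<rightarrow>\<^sub>E {1, -1}. deviating_degrees d p \<epsilon> S \<sigma>))"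
    by (intro measure_pmf.finite_measure_subadditive_finite fin_Ss) auto
  also have "\<dots> \<le> real (card Ss) * (2 ^ n * q ^ n)" using sum_mono[OF each] by simp
  also have "\<dots> \<le> (real d ^ r) ^ n * (2 ^ n * q ^ n)"
    by (rule mult_right_mono[OF card_Ss]) (simp add: q_def)
  also have "\<dots> = (real d ^ r * 2 * q) ^ n" by (simp add: power_mult_distrib)
  finally show ?thesis unfolding Ss_def q_def .
qed

lemma floor_ln_bounds:
  assumes "2 \<le> t" "t \<le> nat \<lfloor>ln (real d)\<rfloor>"
  shows "2 \<le> real_of_int \<lfloor>ln (real d)\<rfloor>" "real t \<le> real_of_int \<lfloor>ln (real d)\<rfloor>"
    "real_of_int \<lfloor>ln (real d)\<rfloor> \<le> ln (real d)"
  using assms by linarith+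

lemma one_le_pruning_rate:
  assumes "0 < p" "0 < \<delta>" "\<delta> < 1" "\<delta>\<^sup>2 * real d * p \<ge> 12 * ln (real d) ^ 4"
    and "2 \<le> t" "real t \<le> ln (real d)"
  shows "1 \<le> \<delta> * real d * p / (2 * real t * ln (real d))"
proof -
  define l where "l = ln (real d)"
  have l: "2 \<le> l" using assms(5,6) unfolding l_def by linarith
  have "2 * real t * l \<le> 2 * l\<^sup>2" using assms(6) l unfolding l_def by (simp add: power2_eq_square)
  also have "\<dots> \<le> 12 * l ^ 4"
  proof -
    have "1 \<le> l\<^sup>2" using l by (simp add: power2_eq_square mult_mono[of 1 l 1 l, simplified])
    hence "l\<^sup>2 * 1 \<le> l\<^sup>2 * l\<^sup>2" by (intro mult_left_mono) auto
    hence "l\<^sup>2 \<le> l ^ 4" by (simp add: power4_eq_xxxx power2_eq_square mult.assoc)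
    moreover have "0 \<le> l ^ 4" using l by simp
    ultimately show ?thesis by linarith
  qed
  also have "\<dots> \<le> \<delta>\<^sup>2 * real d * p" using assms(4) unfolding l_def .
  also have "\<dots> \<le> \<delta> * real d * p"
    using assms(1-3) by (intro mult_right_mono) (auto simp: power2_eq_square mult_left_le)
  finally show ?thesis using assms(5) l unfolding l_def by (simp add: field_simps)
qed

text \<open>Since \<open>2ta = \<delta>dp/log d \<le> \<delta>dp/\<lfloor>log d\<rfloor>\<close>, the hypothesis of the layer bound holds with
  room to spare.\<close>

lemma pruning_rate_le_margin:
  fixes a :: real and d :: nat
  defines "L \<equiv> real_of_int \<lfloor>ln (real d)\<rfloor>"
  assumes a: "a = \<delta> * real d * p / (2 * real t * ln (real d))" "1 \<le> a"
    and L: "0 < L" "L \<le> ln (real d)" and t: "0 < t" and j: "j + 2 \<le> t"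
  shows "real (j + 1) * a \<le> \<delta> * real d * p / L - real j"
proof -
  have "0 < 2 * real t * ln (real d)" using t L by simp
  hence "0 \<le> \<delta> * real d * p" using a by (auto simp: field_simps)
  have "real (j + 1) * a + real j \<le> real (j + 1) * a + real j * a"
    using mult_left_mono[OF a(2), of "real j"] by simp
  also have "\<dots> = real (2 * j + 1) * a" by (simp add: algebra_simps)
  also have "\<dots> \<le> real (2 * t) * a" using j a(2) by (intro mult_right_mono) auto
  also have "\<dots> = \<delta> * real d * p / ln (real d)" using a(1) t L by (simp add: field_simps)
  also have "\<dots> \<le> \<delta> * real d * p / L"
    using \<open>0 \<le> \<delta> * real d * p\<close> L by (intro divide_left_mono) auto
  finally show ?thesis by simp
qed

text \<open>With \<open>\<epsilon> = \<delta>/\<lfloor>log d\<rfloor>\<close> the Chernoff exponent \<open>\<epsilon>\<^sup>2dp/4 \<ge> 3 log\<^sup>2 d\<close> beats both the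
  \<open>d\<^sup>t\<^sup>-\<^sup>1 \<le> exp(log\<^sup>2 d)\<close> choices of a vertex and the factor \<open>2\<close> for its sign.\<close>

lemma sphere_union_base_le_exp_neg_one:
  fixes d :: nat
  defines "L \<equiv> real_of_int \<lfloor>ln (real d)\<rfloor>"
  assumes "0 < p" "\<delta>\<^sup>2 * real d * p \<ge> 12 * ln (real d) ^ 4"
    and L: "2 \<le> L" "real t \<le> L"
  shows "real d ^ (t - 1) * 2 * exp (- ((\<delta> / L)\<^sup>2 * (real d * p) / 4)) \<le> exp (-1)"
proof -
  define l where "l = ln (real d)"
  have lL: "L \<le> l" unfolding L_def l_def by linarith
  have l: "2 \<le> l" using L lL by linarith
  have d: "1 \<le> d" using l unfolding l_def by (cases d) auto
  have "real d ^ (t - 1) = exp (real (t - 1) * l)"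
    using d unfolding l_def by (simp add: exp_of_nat_mult)
  also have "\<dots> \<le> exp (l * l)" using L lL l by (intro exp_mono mult_right_mono) auto
  finally have dpow: "real d ^ (t - 1) \<le> exp (l * l)" .
  have "12 * l ^ 4 / l\<^sup>2 \<le> \<delta>\<^sup>2 * (real d * p) / L\<^sup>2"
    using assms(2,3) L lL l unfolding l_def by (intro frac_le) (auto intro: power_mono simp: mult.assoc)
  hence "12 * (l * l) \<le> (\<delta> / L)\<^sup>2 * (real d * p)"
    using l by (simp add: power_divide power4_eq_xxxx power2_eq_square)
  hence q: "exp (- ((\<delta> / L)\<^sup>2 * (real d * p) / 4)) \<le> exp (- 3 * (l * l))" by simp
  have two: "(2::real) \<le> exp 1" using exp_ge_add_one_self[of 1] by simp
  have "real d ^ (t - 1) * 2 * exp (- ((\<delta> / L)\<^sup>2 * (real d * p) / 4)) \<le> exp (l * l) * exp 1 * exp (- 3 * (l * l))"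
    using dpow two q by (intro mult_mono) auto
  also have "\<dots> = exp (1 - 2 * (l * l))" by (simp add: exp_add[symmetric])
  also have "\<dots> \<le> exp (-1)" using mult_mono[of 1 l 1 l] l by simp
  finally show ?thesis .
qed

theorem mainTheorem6:
  fixes d t :: nat and p \<delta> :: real and v :: "nat set"
  assumes "d \<ge> 3"
    and "0 < p" and "p \<le> 1" and "real d * p \<ge> (ln (real d)) ^ 5"
    and "0 < \<delta>" and "\<delta> < 1" and "\<delta>^2 * real d * p \<ge> 12 * (ln (real d)) ^ 4"
    and "v \<in> cube_V d"
    and "2 \<le> t" and "t \<le> nat \<lfloor>ln (real d)\<rfloor>"
  shows "measure_pmf.prob (Qdp d p) {\<omega>. v \<in> prune_A d p \<delta> \<omega> t}
           \<le> exp (- (((\<delta> * real d * p) / (2 * real t * ln (real d))) ^ (t - 1)))"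
proof -
  define a where "a = (\<delta> * real d * p) / (2 * real t * ln (real d))"
  define L where "L = real_of_int \<lfloor>ln (real d)\<rfloor>"
  define n where "n = nat \<lceil>a ^ (t - 1)\<rceil>"
  have L: "2 \<le> L" "real t \<le> L" "L \<le> ln (real d)"
    using floor_ln_bounds[OF assms(9,10)] unfolding L_def by auto
  have a: "1 \<le> a" unfolding a_def using one_le_pruning_rate assms L by fastforce
  have \<epsilon>: "delta_t d \<delta> 1 = \<delta> / L" "0 < \<delta> / L" "\<delta> / L \<le> 1"
    using assms(5,6) L(1) by (simp_all add: delta_t_def L_def[symmetric])
  have rate: "real (j + 1) * a \<le> \<delta> * real d * p / real_of_int \<lfloor>ln (real d)\<rfloor> - real j" if "j + 2 \<le> t" for j
    using pruning_rate_le_margin[OF a_def a] L assms(9) that unfolding L_def by auto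
  have "measure_pmf.prob (Qdp d p) {\<omega>. v \<in> prune_A d p \<delta> \<omega> t}
      \<le> measure_pmf.prob (Qdp d p) (\<Union>S\<in>{S. S \<subseteq> cube_sphere d v (t - 1) \<and> card S = n}.
                               \<Union>\<sigma>\<in>S \<rightarrow>\<^sub>E {1, -1}. deviating_degrees d p (\<delta> / L) S \<sigma>)"
    using prune_A_subset_deviating_degrees[OF assms(8,9) _ rate] a \<epsilon> assms(2)
    unfolding n_def by (intro measure_pmf.finite_measure_mono) simp_all
  also have "\<dots> \<le> (real d ^ (t - 1) * 2 * exp (- ((\<delta> / L)\<^sup>2 * (real d * p) / 4))) ^ n"
    using prob_deviating_degrees_on_sphere_le assms(2,3,8) \<epsilon> by simp
  also have "\<dots> \<le> exp (-1) ^ n"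
    using sphere_union_base_le_exp_neg_one[OF assms(2,7)] L unfolding L_def by (intro power_mono) auto
  also have "\<dots> = exp (- real n)" by (simp add: exp_of_nat_mult[symmetric])
  also have "\<dots> \<le> exp (- (a ^ (t - 1)))" using real_nat_ceiling_ge[of "a ^ (t - 1)"] unfolding n_def by simp
  finally show ?thesis unfolding a_def .
qed

end
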